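(* Let $D=(D_1,D_2)$ with $D_1\in\mathcal{U}(n,s_1\cdots s_p)$ and $D_2\in\mathcal{U}(n,s_{p+1}\cdots s_{p+q})$, and assume $s_{p+1},\dots,s_t$ are odd and $s_{t+1},\dots,s_{p+q}$ are even, where $p\le t\le p+q$. Then $\mathrm{QQD}^2(D)\ge \mathrm{LB}_1$, where \begin{align*}\mathrm{LB}_1=&\;C+\frac1n\left(\frac32\right)^{p+q}+\frac{n-1}{n}\left(\frac54\right)^p\left(\frac65\right)^{\sum_{k=1}^p\frac{n-s_k}{s_k(n-1)}}\left(\frac32\right)^{\sum_{k=p+1}^{p+q}\frac{n-s_k}{s_k(n-1)}}\left(\frac54\right)^{\sum_{k=t+1}^{p+q}\frac{n}{s_k(n-1)}}\\&\times\prod_{k=p+1}^{t}\prod_{i=1}^{(s_k-1)/2}\left(\frac32-\frac{2i(2s_k-2i)}{4s_k^2}\right)^{\frac{2n}{s_k(n-1)}}\prod_{k=t+1}^{p+q}\prod_{i=1}^{(s_k/2)-1}\left(\frac32-\frac{2i(2s_k-2i)}{4s_k^2}\right)^{\frac{2n}{s_k(n-1)}},\end{align*} and $C=-\prod_{k=1}^{p}\left(\frac{5s_k+1}{4s_k}\right)\left(\frac43\right)^q$.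
   Context: A U-type design in $\mathcal{U}(n,s_1\cdots s_m)$ is an $n\times m$ matrix whose $k$th column takes each value in $\{0,\dots,s_k-1\}$ equally often. $D=(D_1,D_2)$ has $p$ qualitative columns ($D_1$) followed by $q$ quantitative columns ($D_2$). For quantitative columns a level $x$ is transformed to $(2x+1)/(2s_k)\in[0,1]$. Let $\chi=\prod_k\chi_k$, $\chi_k=\{0,\dots,s_k-1\}$ for $k\le p$, $\chi_k=[0,1]$ for $k>p$, and $F$ the uniform distribution on $\chi$. Kernel: $\mathcal{K}(t,z)=\prod_k\mathcal{K}_k(t_k,z_k)$ with $\mathcal{K}_k=(3/2)^{\delta_{t_kz_k}}(5/4)^{1-\delta_{t_kz_k}}$ for $k\le p$ ($\delta$ the Kronecker delta) and $\mathcal{K}_k=\frac32-|t_k-z_k|+|t_k-z_k|^2$ for $k>p$. For $D$ with (transformed) rows $x_1,\dots,x_n$, the squared qualitative-quantitative discrepancy is $\mathrm{QQD}^2(D)=\int_{\chi^2}\mathcal{K}\,dF\,dF-\frac2n\sum_i\int_\chi\mathcal{K}(t,x_i)dF(t)+\frac1{n^2}\sum_{i,j}\mathcal{K}(x_i,x_j)$. Empty sums are $0$ and empty products are $1$. *)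

theory Defs
  imports "HOL-Probability.Probability"
begin

text \<open>Columns are indexed 0-based: column k (k < m) of the paper's column k+1.
  A design is a function D i k (row i < n, column k < m) with levels s k.\<close>

definition U_type :: "nat \<Rightarrow> nat \<Rightarrow> (nat \<Rightarrow> nat) \<Rightarrow> (nat \<Rightarrow> nat \<Rightarrow> nat) \<Rightarrow> bool" where
  "U_type n m s D \<longleftrightarrow>
     (\<forall>k<m. (\<forall>i<n. D i k < s k) \<and>
            (\<forall>u<s k. \<forall>v<s k. card {i. i < n \<and> D i k = u} = card {i. i < n \<and> D i k = v}))"

text \<open>Factor measures: uniform on the levels {0,..,s_k-1} (embedded in the reals) for
  qualitative columns k < p, uniform on [0,1] for quantitative columns.\<close>
definition chi_factor :: "(nat \<Rightarrow> nat) \<Rightarrow> nat \<Rightarrow> nat \<Rightarrow> real measure" where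
  "chi_factor s p k =
     (if k < p then measure_pmf (pmf_of_set (real ` {0..<s k}))
      else uniform_measure lborel {0..1::real})"

definition F_measure :: "(nat \<Rightarrow> nat) \<Rightarrow> nat \<Rightarrow> nat \<Rightarrow> (nat \<Rightarrow> real) measure" where
  "F_measure s p m = PiM {..<m} (chi_factor s p)"

definition QQ_kernel :: "nat \<Rightarrow> nat \<Rightarrow> (nat \<Rightarrow> real) \<Rightarrow> (nat \<Rightarrow> real) \<Rightarrow> real" where
  "QQ_kernel p m t z =
     (\<Prod>k<m. if k < p then (if t k = z k then 3/2 else 5/4)
             else 3/2 - \<bar>t k - z k\<bar> + \<bar>t k - z k\<bar>^2)"

definition transformed_row :: "(nat \<Rightarrow> nat) \<Rightarrow> nat \<Rightarrow> (nat \<Rightarrow> nat \<Rightarrow> nat) \<Rightarrow> nat \<Rightarrow> nat \<Rightarrow> real" where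
  "transformed_row s p D i k =
     (if k < p then real (D i k) else (2 * real (D i k) + 1) / (2 * real (s k)))"

definition QQD2 :: "nat \<Rightarrow> nat \<Rightarrow> nat \<Rightarrow> (nat \<Rightarrow> nat) \<Rightarrow> (nat \<Rightarrow> nat \<Rightarrow> nat) \<Rightarrow> real" where
  "QQD2 n p q s D =
     (let m = p + q; F = F_measure s p m; K = QQ_kernel p m; x = transformed_row s p D in
        (\<integral>t. (\<integral>z. K t z \<partial>F) \<partial>F)
        - 2 / real n * (\<Sum>i<n. \<integral>t. K t (x i) \<partial>F)
        + 1 / (real n)^2 * (\<Sum>i<n. \<Sum>j<n. K (x i) (x j)))"

definition LB1 :: "nat \<Rightarrow> nat \<Rightarrow> nat \<Rightarrow> nat \<Rightarrow> (nat \<Rightarrow> nat) \<Rightarrow> real" where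
  "LB1 n p q t s =
     (let C = - (\<Prod>k<p. (5 * real (s k) + 1) / (4 * real (s k))) * (4/3)^q;
          e = (\<lambda>k. (real n - real (s k)) / (real (s k) * (real n - 1)));
          g = (\<lambda>k i. (3/2 - 2 * real i * (2 * real (s k) - 2 * real i) / (4 * (real (s k))^2))
                      powr (2 * real n / (real (s k) * (real n - 1))))
      in C + 1 / real n * (3/2)^(p+q)
         + (real n - 1) / real n * (5/4)^p
           * (6/5) powr (\<Sum>k<p. e k)
           * (3/2) powr (\<Sum>k\<in>{p..<p+q}. e k)
           * (5/4) powr (\<Sum>k\<in>{t..<p+q}. real n / (real (s k) * (real n - 1)))
           * (\<Prod>k\<in>{p..<t}. \<Prod>i\<in>{1..(s k - 1) div 2}. g k i)
           * (\<Prod>k\<in>{t..<p+q}. \<Prod>i\<in>{1..s k div 2 - 1}. g k i))"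

end

theory Submission
  imports Defs
begin

text \<open>
  The kernel is a product of one-dimensional kernels, and F is the product of the factor
  distributions. Every one-dimensional kernel has the same mean, (5 s + 1) / (4 s) or 4/3,
  whichever point of the factor's support is its second argument. Hence both integral terms
  of QQD2 equal the product M of these means, and
  QQD2(D) = - M + (3/2)^(p+q) / n + S / n^2, where S sums K(x i, x j) over ordered pairs i \<noteq> j.
  By AM-GM, S / (n (n - 1)) is at least the geometric mean of these kernel values. Its logarithm
  is a sum over columns. In a U-type column every level occurs n / s times, so each column
  contributes an explicit sum over pairs of levels. For a quantitative column that sum
  involves ln (3/2 - d + d^2) with d = |a - b| / s. Reflection symmetry under d \<mapsto> 1 - d
  reduces it to s times a sum over j < s, which folds onto j \<le> (s - 1) / 2 or j < s / 2
  according to the parity of s. Exponentiating gives LB1.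
\<close>

section \<open>Integrals of the kernel\<close>

lemma has_real_derivative_mult_abs: "((\<lambda>x::real. x * \<bar>x\<bar>) has_real_derivative 2 * \<bar>x\<bar>) (at x)"
proof -
  consider "x = 0" | "x > 0" | "x < 0" by linarith
  then show ?thesis
  proof cases
    case 1
    have "(\<lambda>h::real. (h * \<bar>h\<bar> - 0) / h) = (\<lambda>h. \<bar>h\<bar>)"
      by (auto simp: fun_eq_iff)
    moreover have "((\<lambda>h::real. \<bar>h\<bar>) \<longlongrightarrow> 0) (at 0)"
      using tendsto_rabs[OF tendsto_ident_at[of 0 UNIV]] by simp
    ultimately show ?thesis using 1 by (simp add: DERIV_def)
  next
    case 2
    have "((\<lambda>x::real. x * x) has_real_derivative 2 * \<bar>x\<bar>) (at x)"
      using 2 by (auto intro!: derivative_eq_intros)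
    then show ?thesis
      by (rule has_field_derivative_transform_within_open[where S="{0<..}"]) (use 2 in auto)
  next
    case 3
    have "((\<lambda>x::real. - (x * x)) has_real_derivative 2 * \<bar>x\<bar>) (at x)"
      using 3 by (auto intro!: derivative_eq_intros)
    then show ?thesis
      by (rule has_field_derivative_transform_within_open[where S="{..<0}"]) (use 3 in auto)
  qed
qed

abbreviation uniform01 :: "real measure" where
  "uniform01 \<equiv> uniform_measure lborel {0..1}"

lemma uniform01_eq_density: "uniform01 = density lborel (\<lambda>x. ennreal (indicator {0..1} x))"
  unfolding uniform_measure_def by (intro density_cong) (auto simp: indicator_def)

lemma integrable_uniform01:
  fixes f :: "real \<Rightarrow> real"
  assumes "continuous_on UNIV f"
  shows "integrable uniform01 f"
proof -
  have "integrable lborel (\<lambda>x. indicator {0..1} x *\<^sub>R f x)"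
    using borel_integrable_atLeastAtMost'[of 0 1 f] continuous_on_subset[OF assms]
    unfolding set_integrable_def by auto
  then show ?thesis
    unfolding uniform01_eq_density using borel_measurable_continuous_onI[OF assms]
    by (subst integrable_density) auto
qed

lemma integral_uniform01_quantitative_kernel:
  fixes a :: real
  assumes "0 \<le> a" "a \<le> 1"
  shows "(\<integral>w. 3/2 - \<bar>a - w\<bar> + \<bar>a - w\<bar>^2 \<partial>uniform01) = 4/3"
proof -
  define g where "g w = (w - a) * \<bar>w - a\<bar>" for w :: real
  define F where "F w = 3/2 * w - g w / 2 + (w - a)^3 / 3" for w :: real
  have "(g has_real_derivative 2 * \<bar>w - a\<bar>) (at w)" for w
    unfolding g_def
    using DERIV_chain2[OF has_real_derivative_mult_abs, of "\<lambda>w. w - a" 1 w]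
    by (simp add: DERIV_diff[OF DERIV_ident DERIV_const, simplified])
  then have "(F has_real_derivative (3/2 - \<bar>a - w\<bar> + \<bar>a - w\<bar>^2)) (at w)" for w
    unfolding F_def
    by (auto intro!: derivative_eq_intros simp: power2_abs abs_minus_commute power2_commute)
  then have "(F has_vector_derivative (3/2 - \<bar>a - w\<bar> + \<bar>a - w\<bar>^2)) (at w within {0..1})" for w
    by (simp add: has_field_derivative_at_within has_real_derivative_iff_has_vector_derivative[symmetric])
  then have "(\<integral>w. indicator {0..1} w *\<^sub>R (3/2 - \<bar>a - w\<bar> + \<bar>a - w\<bar>^2) \<partial>lborel) = F 1 - F 0"
    by (intro integral_FTC_atLeastAtMost) (auto intro!: continuous_intros)
  moreover have "F 1 - F 0 = 4/3"
    using assms by (simp add: F_def g_def abs_of_nonneg abs_of_nonpos power3_eq_cube field_simps)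
  ultimately show ?thesis
    unfolding uniform01_eq_density by (subst integral_density) auto
qed

lemma integral_levels_qualitative_kernel:
  assumes "0 < s" "a \<in> real ` {0..<s}"
  shows "(\<integral>w. (if a = w then 3/2 else 5/4) \<partial>measure_pmf (pmf_of_set (real ` {0..<s})))
       = (5 * real s + 1) / (4 * real s)"
proof -
  let ?A = "real ` {0..<s}"
  have A: "finite ?A" "?A \<noteq> {}" "card ?A = s"
    using assms by (auto simp: card_image)
  have "(\<integral>w. (if a = w then 3/2 else 5/4) \<partial>measure_pmf (pmf_of_set ?A))
      = (\<Sum>w\<in>?A. (5/4 + (if w = a then 1/4 else 0)) / real s)"
    using A by (subst integral_measure_pmf[OF A(1)]) (auto intro!: sum.cong)
  also have "\<dots> = (5 * real s + 1) / (4 * real s)"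
    using A assms by (simp add: sum.distrib sum.delta flip: sum_divide_distrib) (simp add: field_simps)
  finally show ?thesis .
qed

definition kernel_factor :: "nat \<Rightarrow> nat \<Rightarrow> real \<Rightarrow> real \<Rightarrow> real" where
  "kernel_factor p k a w =
     (if k < p then (if a = w then 3/2 else 5/4) else 3/2 - \<bar>a - w\<bar> + \<bar>a - w\<bar>^2)"

definition chi_support :: "(nat \<Rightarrow> nat) \<Rightarrow> nat \<Rightarrow> nat \<Rightarrow> real set" where
  "chi_support s p k = (if k < p then real ` {0..<s k} else {0..1})"

definition kernel_factor_mean :: "(nat \<Rightarrow> nat) \<Rightarrow> nat \<Rightarrow> nat \<Rightarrow> real" where
  "kernel_factor_mean s p k = (if k < p then (5 * real (s k) + 1) / (4 * real (s k)) else 4/3)"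

lemma QQ_kernel_eq_prod: "QQ_kernel p m t z = (\<Prod>k<m. kernel_factor p k (t k) (z k))"
  unfolding QQ_kernel_def kernel_factor_def ..

lemma kernel_factor_diag: "kernel_factor p k a a = 3/2"
  unfolding kernel_factor_def by simp

lemma kernel_factor_commute: "kernel_factor p k a w = kernel_factor p k w a"
  unfolding kernel_factor_def by (auto simp: abs_minus_commute)

lemma prob_space_chi_factor: "prob_space (chi_factor s p k)"
  unfolding chi_factor_def
  by (auto simp: measure_pmf.prob_space_axioms intro: prob_space_uniform_measure)

lemma product_sigma_finite_chi_factor: "product_sigma_finite (chi_factor s p)"
  unfolding product_sigma_finite_def using prob_space_chi_factor prob_space_imp_sigma_finite by blast

lemma integrable_kernel_factor:
  assumes "k < p \<Longrightarrow> 0 < s k"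
  shows "integrable (chi_factor s p k) (kernel_factor p k a)"
proof (cases "k < p")
  case True
  then show ?thesis
    using assms unfolding chi_factor_def by (simp add: integrable_measure_pmf_finite)
next
  case False
  have "integrable uniform01 (\<lambda>w. 3/2 - \<bar>a - w\<bar> + \<bar>a - w\<bar>^2)"
    by (intro integrable_uniform01 continuous_intros)
  then show ?thesis
    using False unfolding chi_factor_def kernel_factor_def by simp
qed

lemma integral_kernel_factor:
  assumes "k < p \<Longrightarrow> 0 < s k" and "a \<in> chi_support s p k"
  shows "(\<integral>w. kernel_factor p k a w \<partial>chi_factor s p k) = kernel_factor_mean s p k"
  using assms integral_levels_qualitative_kernel integral_uniform01_quantitative_kernel
  unfolding chi_support_def chi_factor_def kernel_factor_def kernel_factor_mean_def by auto

lemma AE_chi_factor_support: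
  assumes "k < p \<Longrightarrow> 0 < s k"
  shows "AE a in chi_factor s p k. a \<in> chi_support s p k"
proof (cases "k < p")
  case True
  then show ?thesis
    using assms unfolding chi_factor_def chi_support_def by (simp add: AE_measure_pmf_iff)
next
  case False
  then show ?thesis
    unfolding chi_factor_def chi_support_def by (auto intro!: AE_uniform_measureI)
qed

lemma integral_QQ_kernel_right:
  assumes "\<And>k. k < m \<Longrightarrow> k < p \<Longrightarrow> 0 < s k"
  shows "(\<integral>z. QQ_kernel p m t z \<partial>F_measure s p m)
       = (\<Prod>k<m. \<integral>w. kernel_factor p k (t k) w \<partial>chi_factor s p k)"
  unfolding QQ_kernel_eq_prod F_measure_def
  by (rule product_sigma_finite.product_integral_prod[OF product_sigma_finite_chi_factor])
     (auto intro!: integrable_kernel_factor assms)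

lemma integral_QQ_kernel_at_point:
  assumes "\<And>k. k < m \<Longrightarrow> k < p \<Longrightarrow> 0 < s k" and "\<And>k. k < m \<Longrightarrow> x k \<in> chi_support s p k"
  shows "(\<integral>t. QQ_kernel p m t x \<partial>F_measure s p m) = (\<Prod>k<m. kernel_factor_mean s p k)"
proof -
  have "QQ_kernel p m t x = QQ_kernel p m x t" for t
    unfolding QQ_kernel_eq_prod by (simp add: kernel_factor_commute)
  then show ?thesis
    using assms by (simp add: integral_QQ_kernel_right integral_kernel_factor)
qed

lemma double_integral_QQ_kernel:
  assumes "\<And>k. k < m \<Longrightarrow> k < p \<Longrightarrow> 0 < s k"
  shows "(\<integral>t. (\<integral>z. QQ_kernel p m t z \<partial>F_measure s p m) \<partial>F_measure s p m)
       = (\<Prod>k<m. kernel_factor_mean s p k)"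
proof -
  define G where "G k a = (\<integral>w. kernel_factor p k a w \<partial>chi_factor s p k)" for k a
  have G_AE: "AE a in chi_factor s p k. G k a = kernel_factor_mean s p k" if "k < m" for k
  proof -
    have pos: "k < p \<Longrightarrow> 0 < s k" using assms that by blast
    have "AE a in chi_factor s p k. a \<in> chi_support s p k"
      by (rule AE_chi_factor_support) (rule pos)
    then show ?thesis
      by eventually_elim (simp add: G_def integral_kernel_factor pos)
  qed
  have G_measurable: "G k \<in> borel_measurable (chi_factor s p k)" for k
  proof (cases "k < p")
    case True
    then show ?thesis unfolding chi_factor_def by simp
  next
    case False
    interpret uniform01: prob_space uniform01
      by (rule prob_space_uniform_measure) auto
    show ?thesis
      using False unfolding G_def chi_factor_def kernel_factor_def by simp measurable
  qed
  have G_integral: "(\<integral>a. G k a \<partial>chi_factor s p k) = kernel_factor_mean s p k"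
    and G_integrable: "integrable (chi_factor s p k) (G k)" if "k < m" for k
  proof -
    interpret prob_space "chi_factor s p k" by (rule prob_space_chi_factor)
    show "(\<integral>a. G k a \<partial>chi_factor s p k) = kernel_factor_mean s p k"
      using integral_cong_AE[OF G_measurable _ G_AE[OF that]] by (simp add: prob_space)
    show "integrable (chi_factor s p k) (G k)"
      using integrable_cong_AE[OF G_measurable _ G_AE[OF that]] by simp
  qed
  have "(\<integral>t. (\<integral>z. QQ_kernel p m t z \<partial>F_measure s p m) \<partial>F_measure s p m)
      = (\<integral>t. (\<Prod>k<m. G k (t k)) \<partial>F_measure s p m)"
    using assms by (simp add: integral_QQ_kernel_right G_def)
  also have "\<dots> = (\<Prod>k<m. kernel_factor_mean s p k)"
    unfolding F_measure_def
    by (subst product_sigma_finite.product_integral_prod[OF product_sigma_finite_chi_factor])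
       (auto simp: G_integral G_integrable)
  finally show ?thesis .
qed

section \<open>Balanced columns\<close>

definition balanced :: "nat \<Rightarrow> nat \<Rightarrow> (nat \<Rightarrow> nat) \<Rightarrow> bool" where
  "balanced n S d \<longleftrightarrow>
     (\<forall>i<n. d i < S) \<and> (\<forall>u<S. \<forall>v<S. card {i. i < n \<and> d i = u} = card {i. i < n \<and> d i = v})"

lemma U_type_iff_balanced: "U_type n m s D \<longleftrightarrow> (\<forall>k<m. balanced n (s k) (\<lambda>i. D i k))"
  unfolding U_type_def balanced_def ..

lemma balanced_levels_pos: "balanced n S d \<Longrightarrow> 0 < n \<Longrightarrow> 0 < S"
  unfolding balanced_def by (metis gr_zeroI not_less_zero)

lemma balanced_sum:
  fixes g :: "nat \<Rightarrow> real"
  assumes "balanced n S d"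
  shows "(\<Sum>i<n. g (d i)) = real n / real S * (\<Sum>b<S. g b)"
proof -
  have levels: "\<forall>i<n. d i < S"
    and equal_counts: "\<And>u v. u < S \<Longrightarrow> v < S \<Longrightarrow> card {i. i < n \<and> d i = u} = card {i. i < n \<and> d i = v}"
    using assms unfolding balanced_def by blast+
  show ?thesis
  proof (cases "S = 0")
    case True
    then have "n = 0" using levels by auto
    then show ?thesis by simp
  next
    case False
    define c where "c = card {i. i < n \<and> d i = 0}"
    have count: "card {i. i \<in> {..<n} \<and> d i = b} = c" if "b < S" for b
      using equal_counts[of b 0] False that unfolding c_def by simp
    have level_sum: "(\<Sum>i<n. f (d i)) = real c * (\<Sum>b<S. f b)" for f :: "nat \<Rightarrow> real"
    proof -
      have "(\<Sum>i<n. f (d i)) = (\<Sum>b<S. \<Sum>i | i \<in> {..<n} \<and> d i = b. f (d i))"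
        by (rule sum.group[symmetric]) (use levels in auto)
      also have "\<dots> = (\<Sum>b<S. real (card {i. i \<in> {..<n} \<and> d i = b}) * f b)"
        by (intro sum.cong refl) simp
      also have "\<dots> = (\<Sum>b<S. real c * f b)"
        using count by simp
      finally show ?thesis by (simp add: sum_distrib_left)
    qed
    have "real n = real c * real S"
      using level_sum[of "\<lambda>_. 1"] by simp
    then show ?thesis
      using False by (simp add: level_sum)
  qed
qed

definition offdiag :: "nat \<Rightarrow> (nat \<times> nat) set" where
  "offdiag n = (SIGMA i:{..<n}. {..<n} - {i})"

lemma finite_offdiag: "finite (offdiag n)"
  unfolding offdiag_def by auto

lemma card_offdiag: "card (offdiag n) = n * (n - 1)"
  unfolding offdiag_def by (simp add: card_Diff_singleton)

lemma sum_offdiag: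
  fixes f :: "nat \<Rightarrow> nat \<Rightarrow> 'a::ab_group_add"
  shows "(\<Sum>(i,j)\<in>offdiag n. f i j) = (\<Sum>i<n. \<Sum>j<n. f i j) - (\<Sum>i<n. f i i)"
  unfolding offdiag_def by (simp add: sum.Sigma[symmetric] sum_diff1 sum_subtractf)

lemma balanced_sum_offdiag:
  fixes h :: "nat \<Rightarrow> nat \<Rightarrow> real"
  assumes "balanced n S d"
  shows "(\<Sum>(i,j)\<in>offdiag n. h (d i) (d j))
       = (real n / real S)^2 * (\<Sum>a<S. \<Sum>b<S. h a b) - real n / real S * (\<Sum>a<S. h a a)"
proof -
  have "(\<Sum>i<n. \<Sum>j<n. h (d i) (d j)) = (\<Sum>i<n. real n / real S * (\<Sum>b<S. h (d i) b))"
    by (intro sum.cong refl balanced_sum[OF assms])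
  also have "\<dots> = real n / real S * (\<Sum>i<n. \<Sum>b<S. h (d i) b)"
    by (rule sum_distrib_left[symmetric])
  also have "\<dots> = (real n / real S)^2 * (\<Sum>a<S. \<Sum>b<S. h a b)"
    unfolding balanced_sum[OF assms, of "\<lambda>a. \<Sum>b<S. h a b"] by (simp only: power2_eq_square mult.assoc)
  finally have full: "(\<Sum>i<n. \<Sum>j<n. h (d i) (d j)) = (real n / real S)^2 * (\<Sum>a<S. \<Sum>b<S. h a b)" .
  have diag: "(\<Sum>i<n. h (d i) (d i)) = real n / real S * (\<Sum>a<S. h a a)"
    by (rule balanced_sum[OF assms])
  show ?thesis
    unfolding sum_offdiag full diag ..
qed

section \<open>Sums of the log-kernel over the levels of a column\<close>

lemma sum_reflected_distance:
  fixes f :: "nat \<Rightarrow> 'a::comm_monoid_add"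
  assumes sym: "\<And>j. j \<le> S \<Longrightarrow> f (S - j) = f j" and "a < S"
  shows "(\<Sum>b<S. f (if a \<le> b then b - a else a - b)) = (\<Sum>j<S. f j)"
  using \<open>a < S\<close>
proof (induction a)
  case 0
  then show ?case by simp
next
  case (Suc a)
  \<comment> \<open>Going from a to Suc a exchanges the term f (S - 1 - a) for f (Suc a); by symmetry they are equal.\<close>
  then obtain S' where S: "S = Suc S'" and "a < S'"
    by (cases S) auto
  let ?d = "\<lambda>a b. if a \<le> b then b - a else a - b"
  have "(\<Sum>b<S. f (?d (Suc a) b)) = f (Suc a) + (\<Sum>b<S'. f (?d a b))"
    unfolding S sum.lessThan_Suc_shift by (simp cong: if_cong)
  also have "f (Suc a) = f (S' - a)"
    using sym[of "Suc a"] Suc.prems S by simp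
  also have "f (S' - a) + (\<Sum>b<S'. f (?d a b)) = (\<Sum>b<S. f (?d a b))"
    using \<open>a < S'\<close> by (simp add: S add.commute)
  finally show ?case
    using Suc by simp
qed

lemma sum_symmetric_split:
  fixes f :: "nat \<Rightarrow> real"
  assumes sym: "\<And>j. j \<le> S \<Longrightarrow> f (S - j) = f j" and "2 * h < S"
  shows "(\<Sum>j<S. f j) = f 0 + 2 * (\<Sum>i=1..h. f i) + (\<Sum>j=Suc h..<S - h. f j)"
proof -
  have reflect: "(\<Sum>j=S - h..<S. f j) = (\<Sum>i=1..h. f i)"
    by (rule sum.reindex_bij_witness[where i = "\<lambda>i. S - i" and j = "\<lambda>j. S - j"])
       (use assms in auto)
  have "(\<Sum>j<S. f j) = (\<Sum>j<Suc h. f j) + (\<Sum>j=Suc h..<S - h. f j) + (\<Sum>j=S - h..<S. f j)"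
    using assms(2) sum.atLeastLessThan_concat[of 0 "Suc h" "S - h" f]
      sum.atLeastLessThan_concat[of 0 "S - h" S f]
    by (simp add: lessThan_atLeast0)
  also have "(\<Sum>j<Suc h. f j) = f 0 + (\<Sum>i=1..h. f i)"
    by (simp add: lessThan_Suc_atMost atLeast0AtMost[symmetric] sum.atLeast_Suc_atMost)
  finally show ?thesis
    unfolding reflect by simp
qed

definition level_kernel :: "nat \<Rightarrow> (nat \<Rightarrow> nat) \<Rightarrow> nat \<Rightarrow> nat \<Rightarrow> nat \<Rightarrow> real" where
  "level_kernel p s k a b =
     (if k < p then (if a = b then 3/2 else 5/4)
      else 3/2 - \<bar>real a - real b\<bar> / real (s k) + (\<bar>real a - real b\<bar> / real (s k))^2)"

definition log_quad :: "real \<Rightarrow> real" where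
  "log_quad y = ln (3/2 - y + y^2)"

lemma quad_kernel_pos: "0 < 3/2 - y + (y::real)^2"
  using zero_le_power2[of "y - 1/2"] by (simp add: power2_eq_square algebra_simps)

lemma level_kernel_pos: "0 < level_kernel p s k a b"
  unfolding level_kernel_def using quad_kernel_pos by auto

lemma level_kernel_diag: "level_kernel p s k a a = 3/2"
  unfolding level_kernel_def by simp

lemma log_quad_reflect: "log_quad (1 - y) = log_quad y"
  unfolding log_quad_def by (simp add: power2_eq_square algebra_simps)

lemma log_quad_reflect_level:
  assumes "j \<le> S"
  shows "log_quad (real (S - j) / real S) = log_quad (real j / real S)"
proof (cases "S = 0")
  case False
  then have "real (S - j) / real S = 1 - real j / real S"
    using assms by (simp add: of_nat_diff field_simps)
  then show ?thesis by (simp add: log_quad_reflect)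
qed simp

lemma sum_log_level_kernel_qual:
  assumes "k < p"
  shows "(\<Sum>a<s k. \<Sum>b<s k. ln (level_kernel p s k a b))
       = real (s k) * (ln (3/2) + (real (s k) - 1) * ln (5/4))"
proof -
  have "(\<Sum>b<s k. ln (level_kernel p s k a b)) = ln (3/2) + (real (s k) - 1) * ln (5/4)"
    if "a < s k" for a
  proof -
    have "(\<Sum>b<s k. ln (level_kernel p s k a b)) = (\<Sum>b<s k. ln (5/4) + (if b = a then ln (3/2) - ln (5/4) else 0))"
      using assms unfolding level_kernel_def by (intro sum.cong) auto
    then show ?thesis
      using that by (simp add: sum.distrib sum.delta algebra_simps)
  qed
  then show ?thesis by simp
qed

lemma sum_log_level_kernel_quant:
  assumes "\<not> k < p"
  shows "(\<Sum>a<s k. \<Sum>b<s k. ln (level_kernel p s k a b))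
       = real (s k) * (\<Sum>j<s k. log_quad (real j / real (s k)))"
proof -
  let ?S = "s k"
  have "ln (level_kernel p s k a b)
      = log_quad (real (if a \<le> b then b - a else a - b) / real ?S)" for a b
    using assms unfolding level_kernel_def log_quad_def by (simp add: of_nat_diff)
  then have "(\<Sum>b<?S. ln (level_kernel p s k a b)) = (\<Sum>j<?S. log_quad (real j / real ?S))"
    if "a < ?S" for a
    using sum_reflected_distance[where f = "\<lambda>j. log_quad (real j / real ?S)", OF log_quad_reflect_level that]
    by simp
  then show ?thesis by simp
qed

lemma sum_log_quad_odd:
  assumes "odd S"
  shows "(\<Sum>j<S. log_quad (real j / real S))
       = ln (3/2) + 2 * (\<Sum>i=1..(S - 1) div 2. log_quad (real i / real S))"
proof -
  obtain h where S: "S = 2 * h + 1"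
    using assms oddE by blast
  show ?thesis
    by (subst sum_symmetric_split[where f = "\<lambda>j. log_quad (real j / real S)" and h = h,
          OF log_quad_reflect_level])
       (simp_all add: S log_quad_def)
qed

lemma sum_log_quad_even:
  assumes "even S" "0 < S"
  shows "(\<Sum>j<S. log_quad (real j / real S))
       = ln (3/2) + ln (5/4) + 2 * (\<Sum>i=1..S div 2 - 1. log_quad (real i / real S))"
proof -
  obtain r where S: "S = 2 * r" and "0 < r"
    using assms by auto
  then have "{Suc (r - 1)..<S - (r - 1)} = {r}" and "real r / real S = 1/2"
    by auto
  with \<open>0 < r\<close> show ?thesis
    by (subst sum_symmetric_split[where f = "\<lambda>j. log_quad (real j / real S)" and h = "r - 1",
          OF log_quad_reflect_level])
       (simp_all add: S log_quad_def power2_eq_square)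
qed

section \<open>The lower bound\<close>

definition lb_exponent :: "nat \<Rightarrow> (nat \<Rightarrow> nat) \<Rightarrow> nat \<Rightarrow> real" where
  "lb_exponent n s k = (real n - real (s k)) / (real (s k) * (real n - 1))"

definition lb_factor :: "nat \<Rightarrow> (nat \<Rightarrow> nat) \<Rightarrow> nat \<Rightarrow> nat \<Rightarrow> real" where
  "lb_factor n s k i = (3/2 - 2 * real i * (2 * real (s k) - 2 * real i) / (4 * (real (s k))^2))
                       powr (2 * real n / (real (s k) * (real n - 1)))"

definition lb_product :: "nat \<Rightarrow> nat \<Rightarrow> nat \<Rightarrow> nat \<Rightarrow> (nat \<Rightarrow> nat) \<Rightarrow> real" where
  "lb_product n p q t s = (5/4)^p
     * (6/5) powr (\<Sum>k<p. lb_exponent n s k)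
     * (3/2) powr (\<Sum>k\<in>{p..<p+q}. lb_exponent n s k)
     * (5/4) powr (\<Sum>k\<in>{t..<p+q}. real n / (real (s k) * (real n - 1)))
     * (\<Prod>k\<in>{p..<t}. \<Prod>i\<in>{1..(s k - 1) div 2}. lb_factor n s k i)
     * (\<Prod>k\<in>{t..<p+q}. \<Prod>i\<in>{1..s k div 2 - 1}. lb_factor n s k i)"

definition column_log_mean :: "nat \<Rightarrow> nat \<Rightarrow> nat \<Rightarrow> (nat \<Rightarrow> nat) \<Rightarrow> nat \<Rightarrow> real" where
  "column_log_mean n p t s k =
     (if k < p then ln (5/4) + lb_exponent n s k * ln (6/5)
      else if k < t then lb_exponent n s k * ln (3/2) + (\<Sum>i=1..(s k - 1) div 2. ln (lb_factor n s k i))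
      else lb_exponent n s k * ln (3/2) + real n / (real (s k) * (real n - 1)) * ln (5/4)
           + (\<Sum>i=1..s k div 2 - 1. ln (lb_factor n s k i)))"

lemma LB1_eq_lb_product:
  "LB1 n p q t s = - (\<Prod>k<p. (5 * real (s k) + 1) / (4 * real (s k))) * (4/3)^q
     + 1 / real n * (3/2)^(p+q) + (real n - 1) / real n * lb_product n p q t s"
  unfolding LB1_def Let_def lb_product_def lb_exponent_def lb_factor_def by (simp only: mult.assoc)

lemma lb_factor_eq:
  assumes "0 < s k"
  shows "lb_factor n s k i = exp (2 * real n / (real (s k) * (real n - 1)) * log_quad (real i / real (s k)))"
proof -
  have base: "3/2 - 2 * real i * (2 * real (s k) - 2 * real i) / (4 * (real (s k))^2)
      = 3/2 - real i / real (s k) + (real i / real (s k))^2"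
    using assms by (simp add: field_simps power2_eq_square)
  show ?thesis
    unfolding lb_factor_def base log_quad_def powr_def
    using quad_kernel_pos[of "real i / real (s k)"] by (simp add: mult.commute)
qed

lemma lb_factor_pos: "0 < s k \<Longrightarrow> 0 < lb_factor n s k i"
  by (simp add: lb_factor_eq)

lemma ln_lb_factor:
  "0 < s k \<Longrightarrow> ln (lb_factor n s k i) = 2 * real n / (real (s k) * (real n - 1)) * log_quad (real i / real (s k))"
  by (simp add: lb_factor_eq)

lemma lb_product_pos:
  assumes "\<forall>k<p+q. 0 < s k" "t \<le> p + q"
  shows "0 < lb_product n p q t s"
  unfolding lb_product_def using assms by (auto intro!: prod_pos mult_pos_pos lb_factor_pos)

lemma ln_lb_product:
  assumes "p \<le> t" "t \<le> p + q" and pos: "\<forall>k<p+q. 0 < s k"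
  shows "ln (lb_product n p q t s) = (\<Sum>k<p+q. column_log_mean n p t s k)"
proof -
  let ?c = "column_log_mean n p t s"
  have ln_prod_factors:
    "ln (\<Prod>k\<in>K. \<Prod>i\<in>I k. lb_factor n s k i) = (\<Sum>k\<in>K. \<Sum>i\<in>I k. ln (lb_factor n s k i))"
    if "K \<subseteq> {..<p+q}" "\<And>k. finite (I k)" for K I
  proof -
    have factor_pos: "0 < lb_factor n s k i" if "k \<in> K" for k i
      using pos \<open>K \<subseteq> {..<p+q}\<close> that by (auto intro: lb_factor_pos)
    have "finite K"
      using that finite_subset by blast
    then show ?thesis
      using that(2) factor_pos
      by (simp add: ln_prod prod_pos less_imp_neq[symmetric])
  qed
  define Q1 where "Q1 = (\<Prod>k\<in>{p..<t}. \<Prod>i\<in>{1..(s k - 1) div 2}. lb_factor n s k i)"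
  define Q2 where "Q2 = (\<Prod>k\<in>{t..<p+q}. \<Prod>i\<in>{1..s k div 2 - 1}. lb_factor n s k i)"
  have lnQ1: "ln Q1 = (\<Sum>k\<in>{p..<t}. \<Sum>i=1..(s k - 1) div 2. ln (lb_factor n s k i))"
    unfolding Q1_def using assms by (intro ln_prod_factors) auto
  have lnQ2: "ln Q2 = (\<Sum>k\<in>{t..<p+q}. \<Sum>i=1..s k div 2 - 1. ln (lb_factor n s k i))"
    unfolding Q2_def by (intro ln_prod_factors) auto
  have "0 < Q1" "0 < Q2"
    unfolding Q1_def Q2_def using assms by (auto intro!: prod_pos lb_factor_pos)
  moreover have "(\<Sum>k\<in>{p..<p+q}. lb_exponent n s k)
      = (\<Sum>k\<in>{p..<t}. lb_exponent n s k) + (\<Sum>k\<in>{t..<p+q}. lb_exponent n s k)"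
    using assms by (simp add: sum.atLeastLessThan_concat)
  ultimately have "ln (lb_product n p q t s)
      = real p * ln (5/4) + (\<Sum>k<p. lb_exponent n s k) * ln (6/5)
        + ((\<Sum>k\<in>{p..<t}. lb_exponent n s k) + (\<Sum>k\<in>{t..<p+q}. lb_exponent n s k)) * ln (3/2)
        + (\<Sum>k\<in>{t..<p+q}. real n / (real (s k) * (real n - 1))) * ln (5/4)
        + (\<Sum>k\<in>{p..<t}. \<Sum>i=1..(s k - 1) div 2. ln (lb_factor n s k i))
        + (\<Sum>k\<in>{t..<p+q}. \<Sum>i=1..s k div 2 - 1. ln (lb_factor n s k i))"
    unfolding lb_product_def Q1_def[symmetric] Q2_def[symmetric] lnQ1[symmetric] lnQ2[symmetric]
    by (simp add: ln_mult ln_realpow)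
  also have "\<dots> = (\<Sum>k<p. ?c k) + (\<Sum>k\<in>{p..<t}. ?c k) + (\<Sum>k\<in>{t..<p+q}. ?c k)"
  proof -
    have "(\<Sum>k<p. ?c k) = real p * ln (5/4) + (\<Sum>k<p. lb_exponent n s k) * ln (6/5)"
      unfolding column_log_mean_def by (simp add: sum.distrib sum_distrib_right)
    moreover have "(\<Sum>k\<in>{p..<t}. ?c k) = (\<Sum>k\<in>{p..<t}. lb_exponent n s k) * ln (3/2)
        + (\<Sum>k\<in>{p..<t}. \<Sum>i=1..(s k - 1) div 2. ln (lb_factor n s k i))"
      unfolding column_log_mean_def by (simp add: sum.distrib sum_distrib_right)
    moreover have "(\<Sum>k\<in>{t..<p+q}. ?c k) = (\<Sum>k\<in>{t..<p+q}. lb_exponent n s k) * ln (3/2)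
        + (\<Sum>k\<in>{t..<p+q}. real n / (real (s k) * (real n - 1))) * ln (5/4)
        + (\<Sum>k\<in>{t..<p+q}. \<Sum>i=1..s k div 2 - 1. ln (lb_factor n s k i))"
      unfolding column_log_mean_def using assms(1) by (simp add: sum.distrib sum_distrib_right)
    ultimately show ?thesis
      by (simp add: algebra_simps)
  qed
  also have "\<dots> = (\<Sum>k<p+q. ?c k)"
    using assms by (simp add: lessThan_atLeast0 sum.atLeastLessThan_concat)
  finally show ?thesis .
qed

lemma mean_offdiag_log_level_kernel:
  assumes "balanced n (s k) d" "1 < n" "0 < s k"
    and "p \<le> k \<Longrightarrow> k < t \<Longrightarrow> odd (s k)" and "t \<le> k \<Longrightarrow> even (s k)" and "p \<le> t"
  shows "(\<Sum>(i,j)\<in>offdiag n. ln (level_kernel p s k (d i) (d j))) / (real n * (real n - 1))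
       = column_log_mean n p t s k"
proof -
  let ?S = "real (s k)"
  let ?A = "\<Sum>a<s k. \<Sum>b<s k. ln (level_kernel p s k a b)"
  let ?X = "\<lambda>I. \<Sum>i\<in>I. log_quad (real i / ?S)"
  have offdiag_sum: "(\<Sum>(i,j)\<in>offdiag n. ln (level_kernel p s k (d i) (d j)))
      = (real n / ?S)^2 * ?A - real n / ?S * (?S * ln (3/2))"
    using balanced_sum_offdiag[OF assms(1), of "\<lambda>a b. ln (level_kernel p s k a b)"]
    by (simp add: level_kernel_diag)
  have "(\<Sum>(i,j)\<in>offdiag n. ln (level_kernel p s k (d i) (d j))) / (real n * (real n - 1))
      = lb_exponent n s k * ln (3/2) + real n / (?S * (real n - 1)) * (?A / ?S - ln (3/2))"
  proof -
    have "((N / S)^2 * A - N / S * (S * L)) / (N * (N - 1))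
        = (N - S) / (S * (N - 1)) * L + N / (S * (N - 1)) * (A / S - L)"
      if "1 < N" "0 < S" for N S A L :: real
      using that by (simp add: divide_simps power2_eq_square) algebra
    then show ?thesis
      unfolding offdiag_sum lb_exponent_def using assms(2,3) by simp
  qed
  also have "\<dots> = column_log_mean n p t s k"
  proof -
    have "ln (lb_factor n s k i) = real n / (?S * (real n - 1)) * (2 * log_quad (real i / ?S))" for i
      using assms(3) by (simp add: ln_lb_factor)
    then have lb_factors: "(\<Sum>i\<in>I. ln (lb_factor n s k i)) = real n / (?S * (real n - 1)) * (2 * ?X I)" for I
      by (simp add: sum_distrib_left)
    consider "k < p" | "p \<le> k" "k < t" | "t \<le> k" "\<not> k < p"
      using assms(6) by linarith
    then show ?thesis
    proof cases
      case 1
      have qual_sum: "?A / ?S - ln (3/2) = (?S - 1) * ln (5/4)"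
        using 1 assms(3) by (simp add: sum_log_level_kernel_qual)
      have identity: "(N - S) / (S * (N - 1)) * L3 + N / (S * (N - 1)) * ((S - 1) * L5)
          = L5 + (N - S) / (S * (N - 1)) * (L3 - L5)"
        if "1 < N" "0 < S" for N S L3 L5 :: real
        using that by (simp add: divide_simps) algebra
      have "ln (6/5 :: real) = ln (3/2) - ln (5/4)"
        using ln_div[of "3/2" "5/4"] by simp
      then show ?thesis
        unfolding qual_sum column_log_mean_def lb_exponent_def
        using 1 assms(2,3) identity[of "real n" ?S] by simp
    next
      case 2
      then have "?A / ?S - ln (3/2) = 2 * ?X {1..(s k - 1) div 2}"
        using assms(3,4) by (simp add: sum_log_level_kernel_quant sum_log_quad_odd)
      then show ?thesis
        using 2 by (simp add: column_log_mean_def lb_factors)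
    next
      case 3
      then have "?A / ?S - ln (3/2) = ln (5/4) + 2 * ?X {1..s k div 2 - 1}"
        using assms(3,5) by (simp add: sum_log_level_kernel_quant sum_log_quad_even)
      then show ?thesis
        using 3 by (simp add: column_log_mean_def lb_factors distrib_left)
    qed
  qed
  finally show ?thesis .
qed

lemma exp_mean_ln_le_mean:
  fixes y :: "'a \<Rightarrow> real"
  assumes "finite A" "A \<noteq> {}" "\<And>i. i \<in> A \<Longrightarrow> 0 < y i"
  shows "exp ((\<Sum>i\<in>A. ln (y i)) / card A) \<le> (\<Sum>i\<in>A. y i) / card A"
proof -
  have "0 < card A"
    using assms by (simp add: card_gt_0_iff)
  then have "exp (\<Sum>i\<in>A. (1 / card A) *\<^sub>R ln (y i)) \<le> (\<Sum>i\<in>A. (1 / card A) * exp (ln (y i)))"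
    by (intro convex_on_sum[OF assms(1,2) exp_convex]) auto
  then show ?thesis
    using assms(3) by (simp add: sum_divide_distrib)
qed

lemma QQ_kernel_transformed_rows:
  assumes "\<forall>k<m. 0 < s k"
  shows "QQ_kernel p m (transformed_row s p D i) (transformed_row s p D j)
       = (\<Prod>k<m. level_kernel p s k (D i k) (D j k))"
  unfolding QQ_kernel_eq_prod
proof (rule prod.cong[OF refl])
  fix k assume "k \<in> {..<m}"
  then have "0 < real (s k)" using assms by simp
  then have "transformed_row s p D i k - transformed_row s p D j k = (real (D i k) - real (D j k)) / real (s k)"
    if "\<not> k < p"
    using that unfolding transformed_row_def by (simp add: field_simps)
  then show "kernel_factor p k (transformed_row s p D i k) (transformed_row s p D j k) = level_kernel p s k (D i k) (D j k)"
    unfolding kernel_factor_def level_kernel_def using \<open>0 < real (s k)\<close>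
    by (auto simp: transformed_row_def)
qed

lemma sum_offdiag_QQ_kernel_ge:
  assumes "U_type n (p + q) s D" "p \<le> t" "t \<le> p + q"
    and "\<forall>k\<in>{p..<t}. odd (s k)" "\<forall>k\<in>{t..<p+q}. even (s k)"
  shows "real n * (real n - 1) * lb_product n p q t s
       \<le> (\<Sum>(i,j)\<in>offdiag n. QQ_kernel p (p + q) (transformed_row s p D i) (transformed_row s p D j))"
    (is "_ \<le> (\<Sum>(i,j)\<in>offdiag n. ?K i j)")
proof (cases "n \<le> 1")
  case True
  then have "offdiag n = {}"
    unfolding offdiag_def by auto
  with True show ?thesis
    by (cases n) auto
next
  case False
  have balanced: "balanced n (s k) (\<lambda>i. D i k)" if "k < p + q" for k
    using assms(1) that by (simp add: U_type_iff_balanced)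
  have pos: "\<forall>k<p+q. 0 < s k"
    using False balanced_levels_pos balanced by auto
  have card: "real (card (offdiag n)) = real n * (real n - 1)"
    using False by (simp add: card_offdiag of_nat_diff)
  have "(\<Sum>(i,j)\<in>offdiag n. ln (?K i j)) / (real n * (real n - 1))
      = (\<Sum>k<p+q. (\<Sum>(i,j)\<in>offdiag n. ln (level_kernel p s k (D i k) (D j k))) / (real n * (real n - 1)))"
    using pos
    by (simp add: QQ_kernel_transformed_rows ln_prod level_kernel_pos less_imp_neq[symmetric]
        case_prod_beta sum_divide_distrib sum.swap[of _ "offdiag n"])
  also have "\<dots> = (\<Sum>k<p+q. column_log_mean n p t s k)"
    using False assms pos balanced by (intro sum.cong refl mean_offdiag_log_level_kernel) auto
  also have "\<dots> = ln (lb_product n p q t s)"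
    using assms pos by (simp add: ln_lb_product)
  finally have "lb_product n p q t s = exp ((\<Sum>(i,j)\<in>offdiag n. ln (?K i j)) / card (offdiag n))"
    using pos assms(3) lb_product_pos card by simp
  also have "\<dots> \<le> (\<Sum>(i,j)\<in>offdiag n. ?K i j) / card (offdiag n)"
  proof -
    have "offdiag n \<noteq> {}"
      using False card by auto
    moreover have "0 < ?K i j" for i j
      using pos by (simp add: QQ_kernel_transformed_rows prod_pos level_kernel_pos)
    ultimately show ?thesis
      using exp_mean_ln_le_mean[OF finite_offdiag, where y = "\<lambda>(i,j). ?K i j"] by (simp add: case_prod_beta)
  qed
  finally show ?thesis
    using False card by (simp add: field_simps)
qed

lemma prod_kernel_factor_mean:
  "(\<Prod>k<p+q. kernel_factor_mean s p k) = (\<Prod>k<p. (5 * real (s k) + 1) / (4 * real (s k))) * (4/3)^q"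
proof -
  have "(\<Prod>k<p+q. kernel_factor_mean s p k)
      = (\<Prod>k<p. kernel_factor_mean s p k) * (\<Prod>k\<in>{p..<p+q}. kernel_factor_mean s p k)"
    by (simp add: lessThan_atLeast0 prod.atLeastLessThan_concat)
  then show ?thesis
    by (simp add: kernel_factor_mean_def)
qed

lemma QQD2_eq_offdiag:
  assumes "U_type n (p + q) s D" "0 < n"
  shows "QQD2 n p q s D = - (\<Prod>k<p+q. kernel_factor_mean s p k) + (3/2)^(p+q) / real n
     + (\<Sum>(i,j)\<in>offdiag n. QQ_kernel p (p + q) (transformed_row s p D i) (transformed_row s p D j))
       / (real n)^2"
proof -
  define m where "m = p + q"
  define x where "x = transformed_row s p D"
  define M where "M = (\<Prod>k<m. kernel_factor_mean s p k)"
  have balanced: "balanced n (s k) (\<lambda>i. D i k)" if "k < m" for k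
    using assms(1) that by (simp add: U_type_iff_balanced m_def)
  have levels: "D i k < s k" if "i < n" "k < m" for i k
    using balanced[OF that(2)] that(1) unfolding balanced_def by blast
  have pos: "0 < s k" if "k < m" for k
    using balanced_levels_pos[OF balanced[OF that] assms(2)] .
  have point_integral: "(\<integral>t. QQ_kernel p m t (x i) \<partial>F_measure s p m) = M" if "i < n" for i
  proof (unfold M_def, rule integral_QQ_kernel_at_point)
    fix k assume "k < m"
    from levels[OF that this] pos[OF this] show "x i k \<in> chi_support s p k"
      by (auto simp: x_def transformed_row_def chi_support_def field_simps)
  qed (use pos in auto)
  have diag: "QQ_kernel p m (x i) (x i) = (3/2)^m" for i
    by (simp add: QQ_kernel_eq_prod kernel_factor_diag)
  have "QQD2 n p q s D = M - 2 / real n * (real n * M)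
      + 1 / (real n)^2 * ((\<Sum>(i,j)\<in>offdiag n. QQ_kernel p m (x i) (x j)) + real n * (3/2)^m)"
    unfolding QQD2_def Let_def m_def[symmetric] x_def[symmetric]
    by (simp add: double_integral_QQ_kernel pos M_def[symmetric] point_integral sum_offdiag diag)
  then show ?thesis
    using assms(2) by (simp add: m_def x_def M_def field_simps power2_eq_square)
qed

theorem theorem3:
  fixes n p q t :: nat and s :: "nat \<Rightarrow> nat" and D :: "nat \<Rightarrow> nat \<Rightarrow> nat"
  assumes "0 < n"
    and "U_type n (p + q) s D"
    and "p \<le> t" and "t \<le> p + q"
    and "\<forall>k\<in>{p..<t}. odd (s k)"
    and "\<forall>k\<in>{t..<p+q}. even (s k)"
  shows "QQD2 n p q s D \<ge> LB1 n p q t s"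
proof -
  define SS where "SS = (\<Sum>(i,j)\<in>offdiag n. QQ_kernel p (p + q) (transformed_row s p D i) (transformed_row s p D j))"
  have "(real n - 1) / real n * lb_product n p q t s = real n * (real n - 1) * lb_product n p q t s / (real n)^2"
    using assms(1) by (simp add: power2_eq_square)
  also have "\<dots> \<le> SS / (real n)^2"
    unfolding SS_def using sum_offdiag_QQ_kernel_ge[OF assms(2-6)] by (simp add: divide_right_mono)
  finally show ?thesis
    unfolding QQD2_eq_offdiag[OF assms(2,1)] LB1_eq_lb_product prod_kernel_factor_mean SS_def
    by simp
qed

end
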